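(* Let $A\in\mathcal{S}_n$, $b_1\in\mathbb{R}^n_{++}$, and consider the problem $(\bar P_1)$: $\bar f_1^*=\sup\{\lambda\in\mathbb{R}: A-\lambda b_1b_1^T\in\mathcal{C}_n\}$. (1) If $(\bar P_1)$ is infeasible, then $A\notin\mathcal{C}_n$. (2) If $(\bar P_1)$ is feasible, then: (i) if $\bar f_1^*<0$, then $A\notin\mathcal{C}_n$; (ii) if $\bar f_1^*=0$, then $A\in\operatorname{bd}(\mathcal{C}_n)$; (iii) if $\bar f_1^*>0$ and $\operatorname{rank}(A)<n$, then $A\in\operatorname{bd}(\mathcal{C}_n)$; (iv) if $\bar f_1^*>0$ and $\operatorname{rank}(A)=n$, then $A\in\operatorname{int}(\mathcal{C}_n)$.
   Context: $\mathcal{S}_n$: real symmetric $n\times n$ matrices. $\mathcal{C}_n=\{BB^T: B\in\mathbb{R}^{n\times m}\text{ entrywise nonnegative},\ m\ge1\}$ is the completely positive cone; $\operatorname{int}$ and $\operatorname{bd}$ denote interior and boundary in $\mathcal{S}_n$. $\mathbb{R}^n_{++}=\{x\in\mathbb{R}^n: x>0\text{ entrywise}\}$. *)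

theory Defs
  imports "HOL-Analysis.Analysis"
begin

definition sym_mats :: "(real^'n^'n) set" where
  "sym_mats = {A. transpose A = A}"

text \<open>Completely positive cone: all B B^T with B an entrywise nonnegative
  n x m real matrix, m >= 1. B is given by its entries B i k for k < m.\<close>
definition cp_cone :: "(real^'n^'n) set" where
  "cp_cone = {A. \<exists>m::nat. m \<ge> 1 \<and> (\<exists>B :: 'n \<Rightarrow> nat \<Rightarrow> real.
       (\<forall>i. \<forall>k<m. B i k \<ge> 0) \<and>
       (\<forall>i j. A $ i $ j = (\<Sum>k<m. B i k * B j k)))}"

definition outer :: "real^'n \<Rightarrow> real^'n^'n" where
  "outer b = (\<chi> i j. b $ i * b $ j)"

definition feas1 :: "real^'n^'n \<Rightarrow> real^'n \<Rightarrow> real set" where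
  "feas1 A b = {t. A - t *\<^sub>R outer b \<in> cp_cone}"

definition fstar1 :: "real^'n^'n \<Rightarrow> real^'n \<Rightarrow> ereal" where
  "fstar1 A b = (SUP t\<in>feas1 A b. ereal t)"

end

theory Submission
  imports Defs
begin

text \<open>Membership of \<open>A\<close> in the cone is feasibility of \<open>\<lambda> = 0\<close>, and the feasible set is
  closed downwards because \<open>b b\<^sup>T\<close> is completely positive. If the optimal value is \<open>0\<close>,
  feasible \<open>\<lambda> \<le> 0\<close> close to \<open>0\<close> approximate \<open>A\<close> from inside the cone, while
  \<open>A - \<epsilon> b b\<^sup>T\<close> lies outside it for every \<open>\<epsilon> > 0\<close>; for singular \<open>A\<close> a kernel vector
  shows that \<open>A - \<epsilon> I\<close> is not even positive semidefinite. If some \<open>t > 0\<close> is feasible, then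
  \<open>A = t b b\<^sup>T + B B\<^sup>T\<close> with \<open>b > 0\<close>, and rotating the columns of \<open>[\<surd>t b, B]\<close> two at a time
  gives \<open>A = G G\<^sup>T\<close> with \<open>G\<close> entrywise positive. For invertible \<open>A\<close> the map
  \<open>(Z, K) \<mapsto> (I + Z) A (I + Z)\<^sup>T + K - K\<^sup>T\<close> has a surjective derivative at \<open>0\<close>, so by
  Sussmann's open mapping theorem every symmetric matrix near \<open>A\<close> is
  \<open>(I + Z) G G\<^sup>T (I + Z)\<^sup>T\<close> with \<open>(I + Z) G\<close> still positive, hence completely positive.\<close>

lemma sum_lessThan_add: "(\<Sum>k<m + n. f k) = (\<Sum>k<m. f k) + (\<Sum>k<n. f (m + k))"
  for n :: nat
  by (induction n) (auto simp: add.assoc)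

lemma cp_cone_add:
  fixes X Y :: "real^'n^'n"
  assumes "X \<in> cp_cone" "Y \<in> cp_cone"
  shows "X + Y \<in> cp_cone"
proof -
  obtain m1 and B1 :: "'n \<Rightarrow> nat \<Rightarrow> real" where m1: "m1 \<ge> 1" "\<forall>i. \<forall>k<m1. B1 i k \<ge> 0"
      "\<forall>i j. X $ i $ j = (\<Sum>k<m1. B1 i k * B1 j k)"
    using assms(1) unfolding cp_cone_def by blast
  obtain m2 and B2 :: "'n \<Rightarrow> nat \<Rightarrow> real" where m2: "\<forall>i. \<forall>k<m2. B2 i k \<ge> 0"
      "\<forall>i j. Y $ i $ j = (\<Sum>k<m2. B2 i k * B2 j k)"
    using assms(2) unfolding cp_cone_def by blast
  define B where "B i k = (if k < m1 then B1 i k else B2 i (k - m1))" for i k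
  have "\<forall>i. \<forall>k<m1 + m2. B i k \<ge> 0"
    using m1 m2 by (auto simp: B_def)
  moreover have "(X + Y) $ i $ j = (\<Sum>k<m1 + m2. B i k * B j k)" for i j
    using m1 m2 by (simp add: sum_lessThan_add B_def)
  ultimately show ?thesis
    unfolding cp_cone_def using m1 by (intro CollectI exI[of _ "m1 + m2"]) auto
qed

lemma scaleR_outer_in_cp_cone:
  assumes "s \<ge> 0" "\<forall>i. b $ i \<ge> 0"
  shows "s *\<^sub>R outer b \<in> cp_cone"
  unfolding cp_cone_def outer_def
  using assms by (intro CollectI exI[of _ 1] conjI exI[of _ "\<lambda>i k. sqrt s * b $ i"]) (auto simp: mult_ac)

lemma cp_cone_subset_sym_mats: "cp_cone \<subseteq> sym_mats"
  unfolding cp_cone_def sym_mats_def by (auto simp: transpose_def vec_eq_iff mult.commute)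

lemma cp_cone_quadratic_form_nonneg:
  fixes X :: "real^'n^'n"
  assumes "X \<in> cp_cone"
  shows "x \<bullet> (X *v x) \<ge> 0"
proof -
  obtain m and B :: "'n \<Rightarrow> nat \<Rightarrow> real" where B: "\<forall>i j. X $ i $ j = (\<Sum>k<m. B i k * B j k)"
    using assms unfolding cp_cone_def by blast
  have "x \<bullet> (X *v x) = (\<Sum>i\<in>UNIV. \<Sum>j\<in>UNIV. \<Sum>k<m. (x$i * B i k) * (x$j * B j k))"
    by (simp add: inner_vec_def matrix_vector_mult_def B sum_distrib_left mult_ac)
  also have "\<dots> = (\<Sum>i\<in>UNIV. \<Sum>k<m. \<Sum>j\<in>UNIV. (x$i * B i k) * (x$j * B j k))"
    by (rule sum.cong[OF refl], rule sum.swap)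
  also have "\<dots> = (\<Sum>k<m. \<Sum>i\<in>UNIV. \<Sum>j\<in>UNIV. (x$i * B i k) * (x$j * B j k))"
    by (rule sum.swap)
  also have "\<dots> = (\<Sum>k<m. (\<Sum>i\<in>UNIV. x$i * B i k)\<^sup>2)"
    by (simp add: power2_eq_square sum_product)
  finally show ?thesis
    by (simp add: sum_nonneg)
qed

lemma transpose_zero [simp]: "transpose (0 :: real^'n^'m) = 0"
  by (simp add: transpose_def vec_eq_iff)

lemma transpose_add: "transpose (X + Y) = transpose X + transpose Y"
  for X Y :: "real^'n^'m"
  by (simp add: transpose_def vec_eq_iff)

lemma transpose_diff: "transpose (X - Y) = transpose X - transpose Y"
  for X Y :: "real^'n^'m"
  by (simp add: transpose_def vec_eq_iff)

lemma transpose_outer [simp]: "transpose (outer b) = outer b"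
  by (simp add: outer_def transpose_def vec_eq_iff mult.commute)

lemma feas1_downward_closed:
  assumes "\<forall>i. b $ i \<ge> 0" "t \<in> feas1 A b" "s \<le> t"
  shows "s \<in> feas1 A b"
proof -
  have "A - s *\<^sub>R outer b = (A - t *\<^sub>R outer b) + (t - s) *\<^sub>R outer b"
    by (simp add: algebra_simps)
  also have "\<dots> \<in> cp_cone"
    using assms by (intro cp_cone_add scaleR_outer_in_cp_cone) (auto simp: feas1_def)
  finally show ?thesis
    by (simp add: feas1_def)
qed

lemma le_fstar1: "t \<in> feas1 A b \<Longrightarrow> ereal t \<le> fstar1 A b"
  unfolding fstar1_def by (rule SUP_upper)

lemma less_fstar1_obtain:
  assumes "ereal c < fstar1 A b"
  obtains t where "t \<in> feas1 A b" "c < t"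
  using assms unfolding fstar1_def less_SUP_iff by auto

lemma fstar1_nonneg_imp_closure_cp_cone:
  assumes "\<forall>i. b $ i \<ge> 0" "fstar1 A b \<ge> 0"
  shows "A \<in> closure cp_cone"
  unfolding closure_approachable
proof (intro allI impI)
  fix e :: real
  assume "e > 0"
  define \<delta> where "\<delta> = e / (norm (outer b) + 1)"
  have "\<delta> > 0"
    using \<open>e > 0\<close> by (simp add: \<delta>_def add_nonneg_pos)
  then have "ereal (- \<delta>) < ereal 0"
    by simp
  also have "\<dots> \<le> fstar1 A b"
    using assms(2) by (simp add: zero_ereal_def)
  finally obtain t where t: "t \<in> feas1 A b" "- \<delta> < t"
    by (rule less_fstar1_obtain)
  define s where "s = min t 0"
  have "s \<in> feas1 A b"
    using feas1_downward_closed[OF assms(1) t(1)] by (simp add: s_def)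
  have "\<bar>s\<bar> < \<delta>"
    using t(2) \<open>\<delta> > 0\<close> by (simp add: s_def)
  have "dist (A - s *\<^sub>R outer b) A = \<bar>s\<bar> * norm (outer b)"
    by (simp add: dist_norm)
  also have "\<dots> \<le> \<bar>s\<bar> * (norm (outer b) + 1)"
    by (simp add: mult_left_mono)
  also have "\<dots> < \<delta> * (norm (outer b) + 1)"
    using \<open>\<bar>s\<bar> < \<delta>\<close> by (simp add: add_nonneg_pos)
  also have "\<dots> = e"
    by (simp add: \<delta>_def) (use norm_ge_zero[of "outer b"] in linarith)
  finally show "\<exists>X\<in>cp_cone. dist X A < e"
    using \<open>s \<in> feas1 A b\<close> unfolding feas1_def by blast
qed

section \<open>Points outside the relative interior of the cone\<close>

lemma interior_of_subtopology_imp_ball: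
  fixes x :: "'a::metric_space"
  assumes "x \<in> (top_of_set S) interior_of T"
  obtains r where "r > 0" "\<And>y. y \<in> S \<Longrightarrow> dist y x < r \<Longrightarrow> y \<in> T"
proof -
  obtain U where U: "openin (top_of_set S) U" "x \<in> U" "U \<subseteq> T"
    using assms unfolding interior_of_def by blast
  then obtain V where V: "open V" "U = S \<inter> V"
    by (auto simp: openin_open)
  then obtain r where "r > 0" "ball x r \<subseteq> V"
    using U(2) open_contains_ball by blast
  show ?thesis
  proof (rule that[OF \<open>r > 0\<close>])
    fix y
    assume "y \<in> S" "dist y x < r"
    then have "y \<in> U"
      using \<open>ball x r \<subseteq> V\<close> V(2) by (auto simp: dist_commute)
    then show "y \<in> T"
      using U(3) by blast
  qed
qed

lemma not_in_interior_of_cp_cone: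
  fixes A M :: "real^'n^'n"
  assumes "A \<in> sym_mats" "M \<in> sym_mats" "\<And>\<epsilon>. \<epsilon> > 0 \<Longrightarrow> A - \<epsilon> *\<^sub>R M \<notin> cp_cone"
  shows "A \<notin> (top_of_set sym_mats) interior_of cp_cone"
proof
  assume "A \<in> (top_of_set sym_mats) interior_of cp_cone"
  then obtain r where r: "r > 0" "\<And>X. X \<in> sym_mats \<Longrightarrow> dist X A < r \<Longrightarrow> X \<in> cp_cone"
    by (rule interior_of_subtopology_imp_ball) auto
  define \<epsilon> where "\<epsilon> = r / (norm M + 1)"
  have "\<epsilon> > 0"
    using r(1) by (simp add: \<epsilon>_def add_nonneg_pos)
  have "dist (A - \<epsilon> *\<^sub>R M) A = \<epsilon> * norm M"
    using \<open>\<epsilon> > 0\<close> by (simp add: dist_norm)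
  also have "\<dots> < \<epsilon> * (norm M + 1)"
    using \<open>\<epsilon> > 0\<close> by simp
  also have "\<dots> = r"
    by (simp add: \<epsilon>_def) (use norm_ge_zero[of M] in linarith)
  finally have "A - \<epsilon> *\<^sub>R M \<in> cp_cone"
    using assms(1,2) r(2) by (simp add: sym_mats_def transpose_diff transpose_scalar)
  with assms(3) \<open>\<epsilon> > 0\<close> show False
    by blast
qed

lemma in_frontier_of_cp_cone:
  fixes A M :: "real^'n^'n"
  assumes "A \<in> sym_mats" "M \<in> sym_mats" "A \<in> closure cp_cone"
    and "\<And>\<epsilon>. \<epsilon> > 0 \<Longrightarrow> A - \<epsilon> *\<^sub>R M \<notin> cp_cone"
  shows "A \<in> (top_of_set sym_mats) frontier_of cp_cone"
proof -
  have "A \<in> (top_of_set sym_mats) closure_of cp_cone"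
    using assms(1,3) by (simp add: closure_of_subtopology Int_absorb1[OF cp_cone_subset_sym_mats])
  then show ?thesis
    using not_in_interior_of_cp_cone[OF assms(1,2,4)] by (simp add: frontier_of_def)
qed

lemma singular_minus_scaled_identity_not_in_cp_cone:
  fixes A :: "real^'n^'n"
  assumes "A *v x = 0" "x \<noteq> 0" "\<epsilon> > 0"
  shows "A - \<epsilon> *\<^sub>R mat 1 \<notin> cp_cone"
proof
  assume "A - \<epsilon> *\<^sub>R mat 1 \<in> cp_cone"
  then have "0 \<le> x \<bullet> ((A - \<epsilon> *\<^sub>R mat 1) *v x)"
    by (rule cp_cone_quadratic_form_nonneg)
  also have "\<dots> = - (\<epsilon> * (x \<bullet> x))"
    using assms(1) by (simp add: matrix_vector_mult_diff_rdistrib scaleR_matrix_vector_assoc[symmetric])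
  finally show False
    using assms(2,3) by (smt (verit) inner_gt_zero_iff mult_pos_pos)
qed

section \<open>Entrywise positive factorisations\<close>

lemma rotate_columns_positive:
  fixes p c :: "'n::finite \<Rightarrow> real"
  assumes p: "\<forall>i. p i > 0" and c: "\<forall>i. c i \<ge> 0"
  shows "\<exists>p' d. (\<forall>i. p' i > 0) \<and> (\<forall>i. d i > 0) \<and>
     (\<forall>i j. p i * p j + c i * c j = p' i * p' j + d i * d j)"
proof -
  text \<open>Rotate the columns \<open>(p, c)\<close> by the angle with cotangent \<open>s\<close>; since \<open>s > c i / p i\<close>
    for all \<open>i\<close>, the first rotated column stays positive while the second becomes positive.\<close>
  define s where "s = 1 + (\<Sum>i\<in>UNIV. c i / p i)"
  define \<beta> where "\<beta> = 1 / sqrt (1 + s\<^sup>2)"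
  define \<alpha> where "\<alpha> = s * \<beta>"
  have "s > 0"
    unfolding s_def using p c by (smt (verit) divide_nonneg_pos sum_nonneg)
  have c_less: "c i < s * p i" for i
  proof -
    have "c i / p i \<le> (\<Sum>i\<in>UNIV. c i / p i)"
      by (rule member_le_sum) (use p c in \<open>auto intro: divide_nonneg_pos\<close>)
    then have "c i / p i < s"
      by (simp add: s_def)
    then show ?thesis
      using p by (simp add: divide_less_eq)
  qed
  have "\<beta> > 0"
    by (simp add: \<beta>_def add_pos_nonneg)
  have rotation: "\<alpha>\<^sup>2 + \<beta>\<^sup>2 = 1"
  proof -
    have "\<alpha>\<^sup>2 + \<beta>\<^sup>2 = (1 + s\<^sup>2) * \<beta>\<^sup>2"
      by (simp add: \<alpha>_def algebra_simps power2_eq_square)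
    also have "\<dots> = 1"
      by (simp add: \<beta>_def power_divide) (smt (verit) real_sqrt_pow2 zero_le_power2)
    finally show ?thesis .
  qed
  define p' where "p' i = \<alpha> * p i - \<beta> * c i" for i
  define d where "d i = \<alpha> * c i + \<beta> * p i" for i
  have "p' i > 0" for i
  proof -
    have "p' i = \<beta> * (s * p i - c i)"
      by (simp add: p'_def \<alpha>_def algebra_simps)
    then show ?thesis
      using \<open>\<beta> > 0\<close> c_less[of i] by simp
  qed
  moreover have "d i > 0" for i
    using \<open>\<beta> > 0\<close> \<open>s > 0\<close> p[rule_format, of i] c[rule_format, of i]
    by (simp add: d_def \<alpha>_def add_nonneg_pos)
  moreover have "p' i * p' j + d i * d j = (\<alpha>\<^sup>2 + \<beta>\<^sup>2) * (p i * p j + c i * c j)" for i j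
    by (simp add: p'_def d_def algebra_simps power2_eq_square)
  ultimately show ?thesis
    using rotation by (intro exI[of _ p'] exI[of _ d]) simp
qed

lemma positive_column_factorisation:
  fixes p :: "'n::finite \<Rightarrow> real" and B :: "'n \<Rightarrow> nat \<Rightarrow> real"
  assumes "\<forall>i. p i > 0" "\<forall>i. \<forall>k<m. B i k \<ge> 0"
  shows "\<exists>G. (\<forall>i. \<forall>k<Suc m. G i k > 0) \<and>
     (\<forall>i j. p i * p j + (\<Sum>k<m. B i k * B j k) = (\<Sum>k<Suc m. G i k * G j k))"
  using assms
proof (induction m arbitrary: p)
  case 0
  show ?case
    using 0 by (intro exI[of _ "\<lambda>i k. p i"]) auto
next
  case (Suc m)
  obtain p' d where pd: "\<forall>i. p' i > 0" "\<forall>i. d i > 0"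
      "\<forall>i j. p i * p j + B i m * B j m = p' i * p' j + d i * d j"
    using rotate_columns_positive[of p "\<lambda>i. B i m"] Suc.prems by auto
  obtain G where G: "\<forall>i. \<forall>k<Suc m. G i k > 0"
      "\<forall>i j. p' i * p' j + (\<Sum>k<m. B i k * B j k) = (\<Sum>k<Suc m. G i k * G j k)"
    using Suc.IH[of p'] Suc.prems pd(1) by auto
  define G' where "G' i k = (if k = Suc m then d i else G i k)" for i k
  have "\<forall>i. \<forall>k<Suc (Suc m). G' i k > 0"
    using G pd by (auto simp: G'_def less_Suc_eq)
  moreover have "p i * p j + (\<Sum>k<Suc m. B i k * B j k) = (\<Sum>k<Suc (Suc m). G' i k * G' j k)"
    for i j
    using G(2)[rule_format, of i j] pd(3)[rule_format, of i j] by (simp add: G'_def)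
  ultimately show ?case
    by blast
qed

lemma feas1_pos_imp_positive_gram_factorisation:
  fixes A :: "real^'n^'n"
  assumes "\<forall>i. b $ i > 0" "t > 0" "t \<in> feas1 A b"
  obtains k :: nat and G :: "'n \<Rightarrow> nat \<Rightarrow> real"
  where "k \<ge> 1" "\<forall>i. \<forall>c<k. G i c > 0" "\<forall>i j. A $ i $ j = (\<Sum>c<k. G i c * G j c)"
proof -
  obtain m and B :: "'n \<Rightarrow> nat \<Rightarrow> real" where B: "\<forall>i. \<forall>k<m. B i k \<ge> 0"
      "\<forall>i j. (A - t *\<^sub>R outer b) $ i $ j = (\<Sum>k<m. B i k * B j k)"
    using assms(3) unfolding feas1_def cp_cone_def by blast
  have "\<forall>i. sqrt t * b $ i > 0"
    using assms(1,2) by simp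
  then obtain G where G: "\<forall>i. \<forall>k<Suc m. G i k > 0"
      "\<forall>i j. (sqrt t * b $ i) * (sqrt t * b $ j) + (\<Sum>k<m. B i k * B j k) = (\<Sum>k<Suc m. G i k * G j k)"
    using positive_column_factorisation[of "\<lambda>i. sqrt t * b $ i" m B] B(1) by blast
  have "A $ i $ j = (\<Sum>k<Suc m. G i k * G j k)" for i j
  proof -
    have "A $ i $ j = t * (b $ i * b $ j) + (\<Sum>k<m. B i k * B j k)"
      using B(2)[rule_format, of i j] by (simp add: outer_def)
    also have "t * (b $ i * b $ j) = (sqrt t * b $ i) * (sqrt t * b $ j)"
      using assms(2) by (simp add: algebra_simps)
    finally show ?thesis
      using G(2) by simp
  qed
  then show ?thesis
    using that[of "Suc m" G] G(1) by simp
qed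

section \<open>Openness of the congruence map\<close>

lemma matrix_add_rdistrib: "(X + Y) ** Z = X ** Z + Y ** Z"
  for X Y :: "real^'n^'m" and Z :: "real^'p^'n"
  by (simp add: matrix_matrix_mult_def vec_eq_iff sum.distrib algebra_simps)

lemma bounded_bilinear_congruence:
  fixes A :: "real^'n^'n"
  shows "bounded_bilinear (\<lambda>U V :: real^'n^'n. U ** A ** transpose V)"
proof -
  have "bilinear (\<lambda>U V :: real^'n^'n. U ** A ** transpose V)"
    unfolding bilinear_def
    by (intro conjI allI linearI)
      (simp_all add: transpose_add matrix_add_ldistrib transpose_scalar matrix_scalar_ac
        scalar_matrix_assoc matrix_add_rdistrib)
  then show ?thesis
    by (simp add: bilinear_conv_bounded_bilinear)
qed

lemma congruence_gram_entries:
  fixes A V :: "real^'n^'n" and G :: "'n \<Rightarrow> nat \<Rightarrow> real"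
  assumes "\<forall>i j. A $ i $ j = (\<Sum>c<k. G i c * G j c)"
  shows "(V ** A ** transpose V) $ i $ j =
    (\<Sum>c<k. (\<Sum>l\<in>UNIV. V$i$l * G l c) * (\<Sum>l\<in>UNIV. V$j$l * G l c))"
proof -
  have "(V ** A ** transpose V) $ i $ j =
      (\<Sum>m\<in>UNIV. \<Sum>l\<in>UNIV. \<Sum>c<k. (V$i$l * G l c) * (V$j$m * G m c))"
    using assms by (simp add: matrix_matrix_mult_def transpose_def sum_distrib_left sum_distrib_right mult_ac)
  also have "\<dots> = (\<Sum>m\<in>UNIV. \<Sum>c<k. \<Sum>l\<in>UNIV. (V$i$l * G l c) * (V$j$m * G m c))"
    by (rule sum.cong[OF refl], rule sum.swap)
  also have "\<dots> = (\<Sum>c<k. \<Sum>m\<in>UNIV. \<Sum>l\<in>UNIV. (V$i$l * G l c) * (V$j$m * G m c))"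
    by (rule sum.swap)
  also have "\<dots> = (\<Sum>c<k. \<Sum>l\<in>UNIV. \<Sum>m\<in>UNIV. (V$i$l * G l c) * (V$j$m * G m c))"
    by (rule sum.cong[OF refl], rule sum.swap)
  also have "\<dots> = (\<Sum>c<k. (\<Sum>l\<in>UNIV. V$i$l * G l c) * (\<Sum>l\<in>UNIV. V$j$l * G l c))"
    by (simp add: sum_product)
  finally show ?thesis .
qed

lemma congruence_derivative_right_inverse:
  fixes A Ainv Y :: "real^'n^'n"
  assumes "Ainv ** A = mat 1" "A ** transpose Ainv = mat 1"
    and "Z = (1/4) *\<^sub>R ((Y + transpose Y) ** Ainv)" "K = (1/4) *\<^sub>R (Y - transpose Y)"
  shows "A ** transpose Z + Z ** A + (K - transpose K) = Y"
proof -
  define S where "S = Y + transpose Y"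
  have "transpose S = S"
    by (simp add: S_def transpose_add add.commute)
  have "A ** transpose Z = (1/4) *\<^sub>R (A ** transpose Ainv ** transpose S)"
    by (simp add: assms(3) S_def[symmetric] transpose_scalar matrix_transpose_mul
        matrix_scalar_ac scalar_matrix_assoc[symmetric] matrix_mul_assoc)
  then have "A ** transpose Z = (1/4) *\<^sub>R S"
    using assms(2) \<open>transpose S = S\<close> by simp
  moreover have "Z ** A = (1/4) *\<^sub>R S"
    using assms(1) by (simp add: assms(3) S_def[symmetric] scalar_matrix_assoc[symmetric] matrix_mul_assoc[symmetric])
  moreover have "K - transpose K = (1/2) *\<^sub>R (Y - transpose Y)"
    by (simp add: assms(4) transpose_diff transpose_scalar vec_eq_iff field_simps)
  ultimately show ?thesis
    by (simp add: S_def) (simp add: vec_eq_iff field_simps)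
qed

lemma congruence_map_interior_image:
  fixes A :: "real^'n^'n" and T :: "((real^'n^'n) \<times> (real^'n^'n)) set"
  assumes "transpose A = A" "invertible A" "open T" "0 \<in> T"
  shows "A \<in> interior ((\<lambda>(Z, K). (mat 1 + Z) ** A ** transpose (mat 1 + Z) + (K - transpose K)) ` T)"
proof -
  obtain Ainv where inv1: "Ainv ** A = mat 1"
    using assms(2) invertible_left_inverse by blast
  have inv2: "A ** transpose Ainv = mat 1"
    using arg_cong[OF inv1, of transpose] assms(1) by (simp add: matrix_transpose_mul)
  define \<beta> where "\<beta> U V = U ** A ** transpose V" for U V :: "real^'n^'n"
  interpret \<beta>: bounded_bilinear \<beta>
    unfolding \<beta>_def by (rule bounded_bilinear_congruence)
  define L where "L x = snd x - transpose (snd x)" for x :: "(real^'n^'n) \<times> (real^'n^'n)"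
  have "linear L"
    unfolding L_def by (rule linearI) (simp_all add: transpose_add transpose_diff transpose_scalar algebra_simps)
  then have L: "bounded_linear L"
    by (simp add: linear_conv_bounded_linear)
  define \<psi> where "\<psi> x = \<beta> (mat 1 + fst x) (mat 1 + fst x) + L x"
    for x :: "(real^'n^'n) \<times> (real^'n^'n)"
  define \<psi>' where "\<psi>' x h = \<beta> (mat 1 + fst x) (fst h) + \<beta> (fst h) (mat 1 + fst x) + L h"
    for x h :: "(real^'n^'n) \<times> (real^'n^'n)"
  have \<psi>_deriv: "(\<psi> has_derivative \<psi>' x) (at x)" for x
  proof -
    have "((\<lambda>x. mat 1 + fst x) has_derivative fst) (at x)"
      by (auto intro!: derivative_eq_intros)
    then show ?thesis
      unfolding \<psi>_def \<psi>'_def[abs_def]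
      by (intro has_derivative_add \<beta>.FDERIV bounded_linear_imp_has_derivative L)
  qed
  define g' where "g' Y = ((1/4) *\<^sub>R ((Y + transpose Y) ** Ainv), (1/4) *\<^sub>R (Y - transpose Y))"
    for Y :: "real^'n^'n"
  have "linear g'"
    unfolding g'_def
    by (rule linearI) (simp_all add: transpose_add transpose_diff transpose_scalar matrix_add_rdistrib
        scalar_matrix_assoc[symmetric] algebra_simps)
  then have "bounded_linear g'"
    by (simp add: linear_conv_bounded_linear)
  moreover have "\<psi>' 0 \<circ> g' = id"
    using congruence_derivative_right_inverse[OF inv1 inv2]
    by (simp add: fun_eq_iff \<psi>'_def \<beta>_def L_def g'_def)
  moreover have "continuous_on UNIV \<psi>"
    using \<psi>_deriv by (intro has_derivative_continuous_on) auto
  ultimately have "\<psi> 0 \<in> interior (\<psi> ` T)"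
    using \<psi>_deriv[of 0] assms(3,4)
    by (intro sussmann_open_mapping[of UNIV \<psi> 0 "\<psi>' 0" g' T]) (auto simp: interior_open)
  moreover have "\<psi> 0 = A"
    by (simp add: \<psi>_def \<beta>_def L_def)
  moreover have "\<psi> = (\<lambda>(Z, K). (mat 1 + Z) ** A ** transpose (mat 1 + Z) + (K - transpose K))"
    by (auto simp: fun_eq_iff \<psi>_def \<beta>_def L_def)
  ultimately show ?thesis
    by metis
qed

lemma positive_gram_invertible_in_interior_of_cp_cone:
  fixes A :: "real^'n^'n" and G :: "'n \<Rightarrow> nat \<Rightarrow> real"
  assumes "k \<ge> 1" "\<forall>i. \<forall>c<k. G i c > 0" and A: "\<forall>i j. A $ i $ j = (\<Sum>c<k. G i c * G j c)"
    and "invertible A"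
  shows "A \<in> (top_of_set sym_mats) interior_of cp_cone"
proof -
  have "transpose A = A"
    using A by (simp add: transpose_def vec_eq_iff mult.commute)
  define \<psi> where "\<psi> = (\<lambda>(Z, K). (mat 1 + Z) ** A ** transpose (mat 1 + Z) + (K - transpose K))"
  define GZ where "GZ Z i c = (\<Sum>l\<in>UNIV. (mat 1 + Z) $ i $ l * G l c)" for Z :: "real^'n^'n" and i c
  define T where "T = (\<Inter>i. \<Inter>c\<in>{..<k}. {x :: (real^'n^'n) \<times> (real^'n^'n). 0 < GZ (fst x) i c})"
  have "open T"
    unfolding T_def GZ_def
    by (intro open_INT ballI finite_lessThan finite_class.finite_UNIV open_Collect_less continuous_intros)
  moreover have "GZ 0 i c = G i c" for i c
    unfolding GZ_def by (simp add: mat_def if_distrib if_distribR cong del: if_weak_cong)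
  then have "0 \<in> T"
    using assms(2) by (simp add: T_def)
  ultimately have "A \<in> interior (\<psi> ` T)"
    unfolding \<psi>_def using \<open>transpose A = A\<close> assms(4) by (intro congruence_map_interior_image)
  moreover have "sym_mats \<inter> \<psi> ` T \<subseteq> cp_cone"
  proof
    fix X
    assume "X \<in> sym_mats \<inter> \<psi> ` T"
    then obtain Z K where ZK: "(Z, K) \<in> T" "X = \<psi> (Z, K)" "transpose X = X"
      by (auto simp: sym_mats_def)
    define P where "P = (mat 1 + Z) ** A ** transpose (mat 1 + Z)"
    have "transpose P = P"
      using \<open>transpose A = A\<close> by (simp add: P_def matrix_transpose_mul matrix_mul_assoc)
    have "X = P + (K - transpose K)"
      using ZK(2) by (simp add: \<psi>_def P_def)
    moreover have "transpose X = P - (K - transpose K)"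
      using \<open>transpose P = P\<close> by (simp add: calculation transpose_add transpose_diff)
    ultimately have "X = P"
      using ZK(3) by (simp add: vec_eq_iff)
    then have "X $ i $ j = (\<Sum>c<k. GZ Z i c * GZ Z j c)" for i j
      using congruence_gram_entries[OF A] by (simp add: P_def GZ_def)
    moreover have "\<forall>i. \<forall>c<k. 0 \<le> GZ Z i c"
      using ZK(1) by (auto simp: T_def intro: less_imp_le)
    ultimately show "X \<in> cp_cone"
      unfolding cp_cone_def using assms(1) by blast
  qed
  ultimately have "A \<in> sym_mats \<inter> interior (\<psi> ` T)" "sym_mats \<inter> interior (\<psi> ` T) \<subseteq> cp_cone"
    using \<open>transpose A = A\<close> interior_subset[of "\<psi> ` T"] by (auto simp: sym_mats_def)
  then show ?thesis
    unfolding interior_of_def by blast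
qed

lemma fstar1_zero_imp_frontier_of_cp_cone:
  assumes "A \<in> sym_mats" "\<forall>i. b $ i \<ge> 0" "fstar1 A b = 0"
  shows "A \<in> (top_of_set sym_mats) frontier_of cp_cone"
proof (rule in_frontier_of_cp_cone[OF assms(1)])
  show "outer b \<in> sym_mats"
    by (simp add: sym_mats_def)
  show "A \<in> closure cp_cone"
    using assms(2,3) by (intro fstar1_nonneg_imp_closure_cp_cone) auto
  show "A - \<epsilon> *\<^sub>R outer b \<notin> cp_cone" if "\<epsilon> > 0" for \<epsilon>
  proof
    assume "A - \<epsilon> *\<^sub>R outer b \<in> cp_cone"
    then have "ereal \<epsilon> \<le> fstar1 A b"
      by (intro le_fstar1) (simp add: feas1_def)
    with assms(3) that show False
      by (simp add: zero_ereal_def)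
  qed
qed

lemma singular_cp_cone_in_frontier_of:
  fixes A :: "real^'n^'n"
  assumes "A \<in> cp_cone" "rank A < CARD('n)"
  shows "A \<in> (top_of_set sym_mats) frontier_of cp_cone"
proof (rule in_frontier_of_cp_cone[where M = "mat 1"])
  show "A \<in> sym_mats" "A \<in> closure cp_cone"
    using assms(1) cp_cone_subset_sym_mats closure_subset by blast+
  show "mat 1 \<in> sym_mats"
    by (simp add: sym_mats_def)
  obtain x where "x \<noteq> 0" "A *v x = 0"
    using assms(2) matrix_nonfull_linear_equations_eq[of A] by auto
  then show "A - \<epsilon> *\<^sub>R mat 1 \<notin> cp_cone" if "\<epsilon> > 0" for \<epsilon>
    using that by (intro singular_minus_scaled_identity_not_in_cp_cone)
qed

lemma feas1_pos_full_rank_imp_interior_of_cp_cone: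
  fixes A :: "real^'n^'n"
  assumes "\<forall>i. b $ i > 0" "t > 0" "t \<in> feas1 A b" "rank A = CARD('n)"
  shows "A \<in> (top_of_set sym_mats) interior_of cp_cone"
proof -
  have "invertible A"
    using assms(4) by (simp add: invertible_det_nz det_eq_0_rank)
  show ?thesis
  proof (rule feas1_pos_imp_positive_gram_factorisation[OF assms(1-3)])
    fix k :: nat and G :: "'n \<Rightarrow> nat \<Rightarrow> real"
    assume "k \<ge> 1" "\<forall>i. \<forall>c<k. G i c > 0" "\<forall>i j. A $ i $ j = (\<Sum>c<k. G i c * G j c)"
    then show ?thesis
      using \<open>invertible A\<close> by (rule positive_gram_invertible_in_interior_of_cp_cone)
  qed
qed

theorem mainTheorem10:
  fixes A :: "real^'n^'n" and b :: "real^'n"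
  assumes "A \<in> sym_mats"
    and "\<forall>i. b $ i > 0"
  shows "(feas1 A b = {} \<longrightarrow> A \<notin> cp_cone)
    \<and> (feas1 A b \<noteq> {} \<longrightarrow>
        (fstar1 A b < 0 \<longrightarrow> A \<notin> cp_cone)
      \<and> (fstar1 A b = 0 \<longrightarrow> A \<in> (top_of_set sym_mats) frontier_of cp_cone)
      \<and> (fstar1 A b > 0 \<and> rank A < CARD('n) \<longrightarrow> A \<in> (top_of_set sym_mats) frontier_of cp_cone)
      \<and> (fstar1 A b > 0 \<and> rank A = CARD('n) \<longrightarrow> A \<in> (top_of_set sym_mats) interior_of cp_cone))"
proof -
  have b_nonneg: "\<forall>i. b $ i \<ge> 0"
    using assms(2) less_imp_le by blast
  have cp_iff: "A \<in> cp_cone \<longleftrightarrow> 0 \<in> feas1 A b"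
    by (simp add: feas1_def)
  have neg: "A \<notin> cp_cone" if "fstar1 A b < 0"
    using that cp_iff le_fstar1[of 0 A b] by (auto simp: zero_ereal_def)
  have pos: "\<exists>t>0. t \<in> feas1 A b" if "fstar1 A b > 0"
    using that less_fstar1_obtain[of 0 A b] by (auto simp: zero_ereal_def)
  have feasible_pos: "A \<in> cp_cone" if "t > 0" "t \<in> feas1 A b" for t
    using that cp_iff feas1_downward_closed[OF b_nonneg that(2)] by simp
  have singular: "A \<in> (top_of_set sym_mats) frontier_of cp_cone"
    if "fstar1 A b > 0" "rank A < CARD('n)"
    using pos[OF that(1)] feasible_pos singular_cp_cone_in_frontier_of that(2) by blast
  have full_rank: "A \<in> (top_of_set sym_mats) interior_of cp_cone"
    if "fstar1 A b > 0" "rank A = CARD('n)"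
    using pos[OF that(1)] feas1_pos_full_rank_imp_interior_of_cp_cone[OF assms(2) _ _ that(2)] by blast
  show ?thesis
    using cp_iff neg singular full_rank fstar1_zero_imp_frontier_of_cp_cone[OF assms(1) b_nonneg]
    by blast
qed

end
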